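(* Let $a,a',c,c'\in\mathbb{C}$ with $c,c'$ not non-positive integers, and $x,y\in\mathbb{C}$. Then $${}_1F_1\!\left({a\atop c};x\right){}_1F_1\!\left({a'\atop c'};y\right)=\sum_{j=0}^\infty D_j\,(x+y)^j\,{}_2F_1\!\left({-j,\ c+c'+j-1\atop c};\frac{x}{x+y}\right){}_1F_1\!\left({a+a'+j\atop c+c'+2j};x+y\right),$$ where $$D_j=\frac{(c)_j(a+a')_j}{j!\,(c')_j(c+c'+j-1)_j}\,{}_3F_2\!\left({-j,\ a,\ c+c'+j-1\atop a+a',\ c};1\right).$$
   Context: $(\alpha)_n$ is the Pochhammer symbol. The product $(x+y)^j\,{}_2F_1(-j,c+c'+j-1;c;x/(x+y))$ is understood as the polynomial $\sum_{m=0}^j\frac{(-j)_m(c+c'+j-1)_m}{(c)_m\,m!}x^m(x+y)^{j-m}$. *)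

theory Defs
  imports "HOL-Analysis.Analysis"
begin

definition hyp1F1 :: "complex \<Rightarrow> complex \<Rightarrow> complex \<Rightarrow> complex" where
  "hyp1F1 a c z = (\<Sum>n. pochhammer a n / (pochhammer c n * fact n) * z ^ n)"

definition hyp3F2_term :: "nat \<Rightarrow> complex \<Rightarrow> complex \<Rightarrow> complex \<Rightarrow> complex \<Rightarrow> complex" where
  "hyp3F2_term j a1 a2 b1 b2 =
     (\<Sum>m\<le>j. pochhammer (- of_nat j) m * pochhammer a1 m * pochhammer a2 m
              / (pochhammer b1 m * pochhammer b2 m * fact m))"

text \<open>The homogenised polynomial (x+y)^j 2F1(-j, e; c; x/(x+y)).\<close>
definition hom2F1 :: "nat \<Rightarrow> complex \<Rightarrow> complex \<Rightarrow> complex \<Rightarrow> complex \<Rightarrow> complex" where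
  "hom2F1 j e c x y =
     (\<Sum>m\<le>j. pochhammer (- of_nat j) m * pochhammer e m / (pochhammer c m * fact m)
              * x ^ m * (x + y) ^ (j - m))"

definition coeffD :: "complex \<Rightarrow> complex \<Rightarrow> complex \<Rightarrow> complex \<Rightarrow> nat \<Rightarrow> complex" where
  "coeffD a a' c c' j =
     pochhammer c j * pochhammer (a + a') j
       / (fact j * pochhammer c' j * pochhammer (c + c' + of_nat j - 1) j)
     * hyp3F2_term j a (c + c' + of_nat j - 1) (a + a') c"

end

theory Submission
  imports Defs "Jordan_Normal_Form.Determinant" "HOL-Computational_Algebra.Formal_Power_Series"
begin

text \<open>
  Both sides are power series in \<open>x\<close> and \<open>y\<close>, and we compare their homogeneous parts
  of each degree \<open>N\<close>. Binary forms of degree \<open>N\<close> carry the inner product with weights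
  \<open>p! (c)\<^sub>p (N - p)! (c')\<^sub>N\<^sub>-\<^sub>p\<close> on the monomials \<open>x\<^sup>p y\<^sup>N\<^sup>-\<^sup>p\<close>,
  for which multiplication by \<open>x + y\<close> has an explicit adjoint. In degree \<open>j\<close> the
  kernel of this adjoint contains the form \<open>(x + y)\<^sup>j 2F1(-j, c + c' + j - 1; c; x / (x + y))\<close>,
  and multiplying these kernel forms by powers of \<open>x + y\<close> gives an orthogonal basis in
  every degree. The degree \<open>N\<close> part of the left-hand side is
  \<open>\<Sum>\<^sub>p x\<^sup>p y\<^sup>N\<^sup>-\<^sup>p (a)\<^sub>p (a')\<^sub>N\<^sub>-\<^sub>p / weight p\<close>;
  expanding it in the orthogonal basis (Parseval) gives the degree \<open>N\<close> part of the
  right-hand side, where the substitution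
  \<open>x\<^sup>p y\<^sup>N\<^sup>-\<^sup>p \<mapsto> (a)\<^sub>p (a')\<^sub>N\<^sub>-\<^sub>p\<close>
  applied to the kernel forms produces the \<open>3F2\<close> coefficients. Factorial bounds make the
  resulting double series absolutely convergent, so summing it by rows gives the same value as
  summing it by degrees.
\<close>

lemma pochhammer_minus_of_nat:
  "pochhammer (- of_nat j :: complex) m = (- 1) ^ m * fact m * of_nat (j choose m)"
proof -
  have sq: "(- 1 :: complex) ^ m * (- 1) ^ m = 1"
    by (simp flip: power_mult_distrib)
  have "of_nat (j choose m) = ((- 1) ^ m * pochhammer (- of_nat j) m / fact m :: complex)"
    by (simp add: binomial_gbinomial gbinomial_pochhammer)
  then show ?thesis
    by (simp add: field_simps mult.assoc[symmetric] sq)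
qed

lemma fact_mult_fact_le: "p \<le> d \<Longrightarrow> fact p * fact (d - p) \<le> (fact d :: real)"
proof -
  assume "p \<le> d"
  then have "fact p * fact (d - p) * 1 \<le> fact p * fact (d - p) * real (d choose p)"
    by (intro mult_left_mono) (auto simp: Suc_le_eq)
  also have "\<dots> = fact d"
    using binomial_fact[OF \<open>p \<le> d\<close>, where 'a = real] by simp
  finally show ?thesis by simp
qed

lemma Suc_le_power2: "real (Suc j) \<le> 2 ^ j"
proof -
  have "Suc j \<le> 2 ^ j" using less_exp[of j] by (rule Suc_leI)
  then have "real (Suc j) \<le> real (2 ^ j)" by (simp only: of_nat_le_iff)
  then show ?thesis by simp
qed

lemma parseval_of_completeness:
  fixes B :: "nat \<Rightarrow> nat \<Rightarrow> complex"
  assumes complete: "\<And>p q. p \<le> N \<Longrightarrow> q \<le> N \<Longrightarrow>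
      (\<Sum>j\<le>N. B j p * B j q / n j) = (if p = q then 1 / W p else 0)"
  shows "(\<Sum>j\<le>N. (\<Sum>q\<le>N. B j q * A q) * (\<Sum>p\<le>N. B j p * X p) / n j) = (\<Sum>p\<le>N. X p * A p / W p)"
proof -
  have "(\<Sum>j\<le>N. (\<Sum>q\<le>N. B j q * A q) * (\<Sum>p\<le>N. B j p * X p) / n j)
      = (\<Sum>j\<le>N. \<Sum>q\<le>N. \<Sum>p\<le>N. X p * A q * (B j p * B j q / n j))"
    by (simp add: sum_product sum_divide_distrib mult_ac)
  also have "\<dots> = (\<Sum>q\<le>N. \<Sum>j\<le>N. \<Sum>p\<le>N. X p * A q * (B j p * B j q / n j))"
    by (rule sum.swap)
  also have "\<dots> = (\<Sum>q\<le>N. \<Sum>p\<le>N. \<Sum>j\<le>N. X p * A q * (B j p * B j q / n j))"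
    by (intro sum.cong refl sum.swap)
  also have "\<dots> = (\<Sum>q\<le>N. \<Sum>p\<le>N. if p = q then X p * A q / W p else 0)"
  proof (intro sum.cong refl)
    fix p q assume "p \<in> {..N}" "q \<in> {..N}"
    then show "(\<Sum>j\<le>N. X p * A q * (B j p * B j q / n j)) = (if p = q then X p * A q / W p else 0)"
      by (simp only: sum_distrib_left[symmetric] complete atMost_iff) simp
  qed
  finally show ?thesis by simp
qed

section \<open>Binary forms\<close>

text \<open>A coefficient sequence \<open>f\<close>, together with a degree \<open>d\<close> fixed by the context,
  stands for the binary form \<open>\<Sum>p\<le>d. f p x\<^sup>p y\<^sup>d\<^sup>-\<^sup>p\<close>;
  \<open>mul_xy\<close> multiplies it by \<open>x + y\<close>.\<close>

definition mul_xy :: "(nat \<Rightarrow> complex) \<Rightarrow> nat \<Rightarrow> complex" where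
  "mul_xy f p = (if p = 0 then 0 else f (p - 1)) + f p"

definition vanishes_above :: "nat \<Rightarrow> (nat \<Rightarrow> complex) \<Rightarrow> bool" where
  "vanishes_above d f \<longleftrightarrow> (\<forall>p>d. f p = 0)"

text \<open>For \<open>u = power x\<close> and \<open>v = power y\<close> this is the value of the form at \<open>(x, y)\<close>;
  Pochhammer symbols in place of the powers produce the \<open>3F2\<close> coefficients.\<close>

definition form_eval ::
    "(nat \<Rightarrow> complex) \<Rightarrow> (nat \<Rightarrow> complex) \<Rightarrow> nat \<Rightarrow> (nat \<Rightarrow> complex) \<Rightarrow> complex" where
  "form_eval u v d f = (\<Sum>p\<le>d. f p * u p * v (d - p))"

definition monom_binom :: "nat \<Rightarrow> nat \<Rightarrow> nat \<Rightarrow> complex" where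
  "monom_binom m r q = (if m \<le> q then of_nat (r choose (q - m)) else 0)"

lemma vanishes_above_mul_xy: "vanishes_above d f \<Longrightarrow> vanishes_above (Suc d) (mul_xy f)"
  by (auto simp: vanishes_above_def mul_xy_def)

lemma vanishes_above_mul_xy_pow: "vanishes_above d f \<Longrightarrow> vanishes_above (d + k) ((mul_xy ^^ k) f)"
  by (induction k) (auto intro: vanishes_above_mul_xy)

lemma vanishes_above_monom_binom: "vanishes_above (m + r) (monom_binom m r)"
  by (auto simp: vanishes_above_def monom_binom_def binomial_eq_0)

lemma mul_xy_scale: "mul_xy (\<lambda>p. u * f p) = (\<lambda>p. u * mul_xy f p)"
  by (auto simp: mul_xy_def fun_eq_iff algebra_simps)

lemma mul_xy_sum: "mul_xy (\<lambda>p. \<Sum>i\<in>A. F i p) = (\<lambda>p. \<Sum>i\<in>A. mul_xy (F i) p)"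
  by (auto simp: mul_xy_def fun_eq_iff sum.distrib)

lemma mul_xy_monom_binom: "mul_xy (monom_binom m r) = monom_binom m (Suc r)"
proof
  fix q
  show "mul_xy (monom_binom m r) q = monom_binom m (Suc r) q"
  proof (cases "m \<le> q")
    case True
    then obtain i where "q = m + i" using le_iff_add by blast
    then show ?thesis by (cases i; cases m) (auto simp: mul_xy_def monom_binom_def Suc_diff_le)
  qed (auto simp: mul_xy_def monom_binom_def)
qed

lemma mul_xy_pow_monom_binom: "(mul_xy ^^ r) (monom_binom m 0) = monom_binom m r"
  by (induction r) (auto simp: mul_xy_monom_binom)

lemma form_eval_sum: "form_eval u v d (\<lambda>q. \<Sum>i\<in>A. F i q) = (\<Sum>i\<in>A. form_eval u v d (F i))"
  unfolding form_eval_def by (simp add: sum_distrib_right sum.swap[of _ A])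

lemma form_eval_scale: "form_eval u v d (\<lambda>q. s * f q) = s * form_eval u v d f"
  unfolding form_eval_def by (simp add: sum_distrib_left mult_ac)

lemma form_eval_mul_xy:
  assumes "vanishes_above d f"
    and step: "\<And>p. p \<le> d \<Longrightarrow> u (Suc p) * v (d - p) + u p * v (Suc (d - p)) = l * (u p * v (d - p))"
  shows "form_eval u v (Suc d) (mul_xy f) = l * form_eval u v d f"
proof -
  have "form_eval u v (Suc d) (mul_xy f)
      = (\<Sum>p\<le>Suc d. (if p = 0 then 0 else f (p - 1)) * u p * v (Suc d - p))
        + (\<Sum>p\<le>Suc d. f p * u p * v (Suc d - p))"
    by (simp add: form_eval_def mul_xy_def sum.distrib algebra_simps)
  also have "(\<Sum>p\<le>Suc d. (if p = 0 then 0 else f (p - 1)) * u p * v (Suc d - p))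
      = (\<Sum>p\<le>d. f p * u (Suc p) * v (d - p))"
    by (subst sum.atMost_Suc_shift) simp
  also have "(\<Sum>p\<le>Suc d. f p * u p * v (Suc d - p)) = (\<Sum>p\<le>d. f p * u p * v (Suc (d - p)))"
    using assms(1) by (simp add: vanishes_above_def Suc_diff_le)
  also have "(\<Sum>p\<le>d. f p * u (Suc p) * v (d - p)) + (\<Sum>p\<le>d. f p * u p * v (Suc (d - p)))
      = (\<Sum>p\<le>d. f p * (l * (u p * v (d - p))))"
    unfolding sum.distrib[symmetric] by (intro sum.cong refl) (simp flip: step add: algebra_simps)
  finally show ?thesis by (simp add: form_eval_def sum_distrib_left mult_ac)
qed

lemma form_eval_mul_xy_pow:
  assumes "vanishes_above d f"
    and step: "\<And>n p. p \<le> n \<Longrightarrow> u (Suc p) * v (n - p) + u p * v (Suc (n - p)) = l n * (u p * v (n - p))"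
  shows "form_eval u v (d + k) ((mul_xy ^^ k) f) = (\<Prod>i<k. l (d + i)) * form_eval u v d f"
proof (induction k)
  case (Suc k)
  have "form_eval u v (Suc (d + k)) (mul_xy ((mul_xy ^^ k) f)) = l (d + k) * form_eval u v (d + k) ((mul_xy ^^ k) f)"
    by (rule form_eval_mul_xy[OF vanishes_above_mul_xy_pow[OF assms(1)] step])
  then show ?case by (simp add: Suc.IH mult_ac)
qed simp

lemma form_eval_monom_binom:
  assumes "\<And>n p. p \<le> n \<Longrightarrow> u (Suc p) * v (n - p) + u p * v (Suc (n - p)) = l n * (u p * v (n - p))"
  shows "form_eval u v (m + r) (monom_binom m r) = u m * v 0 * (\<Prod>i<r. l (m + i))"
proof -
  have "form_eval u v m (monom_binom m 0) = (\<Sum>p\<in>{m}. monom_binom m 0 p * u p * v (m - p))"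
    unfolding form_eval_def by (rule sum.mono_neutral_right) (auto simp: monom_binom_def)
  then have "form_eval u v m (monom_binom m 0) = u m * v 0"
    by (simp add: monom_binom_def)
  then show ?thesis
    using form_eval_mul_xy_pow[OF vanishes_above_monom_binom[of m 0] assms, of r]
    by (simp add: mul_xy_pow_monom_binom mult_ac)
qed

lemma powers_mul_xy_step: "x ^ Suc p * y ^ (n - p) + x ^ p * y ^ Suc (n - p) = (x + y) * (x ^ p * y ^ (n - p))"
  for x y :: complex
  by (simp add: algebra_simps)

lemma pochhammer_mul_xy_step:
  fixes a a' :: complex
  assumes "p \<le> n"
  shows "pochhammer a (Suc p) * pochhammer a' (n - p) + pochhammer a p * pochhammer a' (Suc (n - p))
       = (a + a' + of_nat n) * (pochhammer a p * pochhammer a' (n - p))"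
  using assms by (simp add: pochhammer_Suc algebra_simps)

lemma form_eval_powers_mul_xy_pow:
  "vanishes_above d f \<Longrightarrow> form_eval (power x) (power y) (d + k) ((mul_xy ^^ k) f)
     = (x + y) ^ k * form_eval (power x) (power y) d f"
  using form_eval_mul_xy_pow[of d f "power x" "power y" "\<lambda>_. x + y"] powers_mul_xy_step by simp

lemma form_eval_pochhammer_mul_xy_pow:
  "vanishes_above d f \<Longrightarrow> form_eval (pochhammer a) (pochhammer a') (d + k) ((mul_xy ^^ k) f)
     = pochhammer (a + a' + of_nat d) k * form_eval (pochhammer a) (pochhammer a') d f"
  using form_eval_mul_xy_pow[of d f "pochhammer a" "pochhammer a'" "\<lambda>n. a + a' + of_nat n"] pochhammer_mul_xy_step
  by (simp add: pochhammer_prod atLeast0LessThan add.assoc)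

lemma form_eval_powers_monom_binom:
  "m \<le> d \<Longrightarrow> form_eval (power x) (power y) d (monom_binom m (d - m)) = x ^ m * (x + y) ^ (d - m)"
  using form_eval_monom_binom[of "power x" "power y" "\<lambda>_. x + y" m "d - m"] powers_mul_xy_step by simp

lemma form_eval_pochhammer_monom_binom:
  "m \<le> d \<Longrightarrow> form_eval (pochhammer a) (pochhammer a') d (monom_binom m (d - m))
     = pochhammer a m * pochhammer (a + a' + of_nat m) (d - m)"
  using form_eval_monom_binom[of "pochhammer a" "pochhammer a'" "\<lambda>n. a + a' + of_nat n" m "d - m"] pochhammer_mul_xy_step
  by (simp add: pochhammer_prod atLeast0LessThan add.assoc)

section \<open>An orthogonal basis of binary forms\<close>

locale pochhammer_weight =
  fixes c c' :: complex
  assumes c_not_nonpos_int: "\<And>n::nat. c \<noteq> - of_nat n"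
    and c'_not_nonpos_int: "\<And>n::nat. c' \<noteq> - of_nat n"
    and cc'_not_nonpos_int: "\<And>n::nat. c + c' \<noteq> - of_nat n"
begin

definition weight :: "nat \<Rightarrow> nat \<Rightarrow> complex" where
  "weight d p = fact p * pochhammer c p * fact (d - p) * pochhammer c' (d - p)"

definition inner :: "nat \<Rightarrow> (nat \<Rightarrow> complex) \<Rightarrow> (nat \<Rightarrow> complex) \<Rightarrow> complex" where
  "inner d f g = (\<Sum>p\<le>d. f p * g p * weight d p)"

definition mul_xy_adj :: "nat \<Rightarrow> (nat \<Rightarrow> complex) \<Rightarrow> nat \<Rightarrow> complex" where
  "mul_xy_adj d g p = of_nat (Suc p) * (c + of_nat p) * g (Suc p)
     + of_nat (Suc d - p) * (c' + of_nat (d - p)) * g p"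

definition adj_kernel :: "nat \<Rightarrow> (nat \<Rightarrow> complex) \<Rightarrow> bool" where
  "adj_kernel j h \<longleftrightarrow>
     vanishes_above j h \<and> (\<forall>d. j = Suc d \<longrightarrow> mul_xy_adj d h = (\<lambda>_. 0))"

lemma pochhammer_c_nonzero: "pochhammer c n \<noteq> 0"
  using c_not_nonpos_int by (auto simp: pochhammer_eq_0_iff)

lemma pochhammer_c'_nonzero: "pochhammer c' n \<noteq> 0"
  using c'_not_nonpos_int by (auto simp: pochhammer_eq_0_iff)

lemma pochhammer_cc'_nonzero: "pochhammer (c + c' + of_nat m) n \<noteq> 0"
proof
  assume "pochhammer (c + c' + of_nat m) n = 0"
  then obtain k where "c + c' + of_nat m = - of_nat k" by (auto simp: pochhammer_eq_0_iff)
  then have "c + c' = - of_nat (m + k)" by (simp add: algebra_simps)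
  then show False using cc'_not_nonpos_int by blast
qed

lemma pochhammer_cc'_pred_nonzero: "pochhammer (c + c' + of_nat j - 1) j \<noteq> 0"
proof (cases j)
  case (Suc d)
  then show ?thesis using pochhammer_cc'_nonzero[of d j] by (simp add: add.assoc)
qed simp

lemma weight_nonzero: "weight d p \<noteq> 0"
  by (simp add: weight_def pochhammer_c_nonzero pochhammer_c'_nonzero)

lemma weight_Suc_Suc: "weight (Suc d) (Suc p) = of_nat (Suc p) * (c + of_nat p) * weight d p"
  by (simp add: weight_def pochhammer_Suc algebra_simps)

lemma weight_Suc: "p \<le> d \<Longrightarrow> weight (Suc d) p = of_nat (Suc d - p) * (c' + of_nat (d - p)) * weight d p"
  by (simp add: weight_def Suc_diff_le pochhammer_Suc algebra_simps)

lemma inner_commute: "inner d f g = inner d g f"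
  by (simp add: inner_def mult_ac)

lemma inner_scale_right: "inner d f (\<lambda>p. s * g p) = s * inner d f g"
  by (simp add: inner_def sum_distrib_left mult_ac)

lemma inner_zero_right: "inner d f (\<lambda>p. 0) = 0"
  by (simp add: inner_def)

lemma inner_mul_xy:
  assumes "vanishes_above d f"
  shows "inner (Suc d) (mul_xy f) g = inner d f (mul_xy_adj d g)"
proof -
  have "inner (Suc d) (mul_xy f) g
      = (\<Sum>p\<le>Suc d. (if p = 0 then 0 else f (p - 1)) * g p * weight (Suc d) p)
        + (\<Sum>p\<le>Suc d. f p * g p * weight (Suc d) p)"
    by (simp add: inner_def mul_xy_def sum.distrib algebra_simps)
  also have "(\<Sum>p\<le>Suc d. (if p = 0 then 0 else f (p - 1)) * g p * weight (Suc d) p)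
      = (\<Sum>p\<le>d. f p * g (Suc p) * weight (Suc d) (Suc p))"
    by (subst sum.atMost_Suc_shift) simp
  also have "(\<Sum>p\<le>Suc d. f p * g p * weight (Suc d) p) = (\<Sum>p\<le>d. f p * g p * weight (Suc d) p)"
    using assms by (simp add: vanishes_above_def)
  also have "(\<Sum>p\<le>d. f p * g (Suc p) * weight (Suc d) (Suc p)) + (\<Sum>p\<le>d. f p * g p * weight (Suc d) p)
      = inner d f (mul_xy_adj d g)"
    unfolding inner_def mul_xy_adj_def sum.distrib[symmetric]
    by (rule sum.cong) (auto simp: weight_Suc_Suc weight_Suc algebra_simps)
  finally show ?thesis .
qed

lemma inner_mul_xy_adj_kernel:
  assumes "adj_kernel (Suc d) h" "vanishes_above d g"
  shows "inner (Suc d) (mul_xy g) h = 0"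
  using inner_mul_xy[OF assms(2), of h] assms(1) by (simp add: adj_kernel_def inner_zero_right)

lemma mul_xy_adj_mul_xy_0:
  "vanishes_above 0 f \<Longrightarrow> mul_xy_adj 0 (mul_xy f) p = (c + c') * f p"
  by (cases p) (auto simp: vanishes_above_def mul_xy_adj_def mul_xy_def algebra_simps)

lemma mul_xy_adj_mul_xy:
  assumes "vanishes_above (Suc d) f"
  shows "mul_xy_adj (Suc d) (mul_xy f) p = mul_xy (mul_xy_adj d f) p + (2 * of_nat (Suc d) + c + c') * f p"
proof (cases p)
  case 0
  then show ?thesis by (simp add: mul_xy_adj_def mul_xy_def algebra_simps)
next
  case (Suc q)
  show ?thesis
  proof (cases "q < d")
    case True
    then obtain r where "d = q + Suc r" by (metis less_imp_Suc_add add_Suc_right add_Suc)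
    then show ?thesis unfolding Suc by (simp add: mul_xy_adj_def mul_xy_def algebra_simps)
  next
    case False
    then obtain r where r: "q = d + r" using le_iff_add by (metis not_less)
    have "f (Suc (Suc (d + r))) = 0" "f (Suc (Suc (Suc (d + r)))) = 0" "0 < r \<Longrightarrow> f (Suc (d + r)) = 0"
      using assms by (auto simp: vanishes_above_def)
    then show ?thesis unfolding Suc r
      by (cases r) (simp_all add: mul_xy_adj_def mul_xy_def algebra_simps)
  qed
qed

lemma mul_xy_adj_mul_xy_pow:
  assumes "adj_kernel j h"
  shows "mul_xy_adj (j + k) ((mul_xy ^^ Suc k) h)
       = (\<lambda>p. of_nat (Suc k) * (2 * of_nat j + of_nat k + c + c') * (mul_xy ^^ k) h p)"
proof (induction k)
  case 0
  show ?case
  proof (cases j)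
    case 0
    then show ?thesis using assms mul_xy_adj_mul_xy_0 by (auto simp: adj_kernel_def fun_eq_iff algebra_simps)
  next
    case (Suc d)
    have "mul_xy_adj (Suc d) (mul_xy h) p = (2 * of_nat (Suc d) + c + c') * h p" for p
      using mul_xy_adj_mul_xy[of d h p] assms Suc by (simp add: adj_kernel_def mul_xy_def)
    then show ?thesis using Suc by (auto simp: fun_eq_iff algebra_simps)
  qed
next
  case (Suc k)
  have "vanishes_above (Suc (j + k)) ((mul_xy ^^ Suc k) h)"
    using vanishes_above_mul_xy_pow[of j h "Suc k"] assms by (simp add: adj_kernel_def)
  note step = mul_xy_adj_mul_xy[OF this]
  have "mul_xy_adj (j + Suc k) ((mul_xy ^^ Suc (Suc k)) h) p
      = of_nat (Suc (Suc k)) * (2 * of_nat j + of_nat (Suc k) + c + c') * (mul_xy ^^ Suc k) h p" for p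
  proof -
    have "mul_xy_adj (j + Suc k) ((mul_xy ^^ Suc (Suc k)) h) p
        = mul_xy (mul_xy_adj (j + k) ((mul_xy ^^ Suc k) h)) p + (2 * of_nat (Suc (j + k)) + c + c') * (mul_xy ^^ Suc k) h p"
      using step[of p] by simp
    also have "mul_xy (mul_xy_adj (j + k) ((mul_xy ^^ Suc k) h)) p
        = of_nat (Suc k) * (2 * of_nat j + of_nat k + c + c') * (mul_xy ^^ Suc k) h p"
      unfolding Suc.IH mul_xy_scale by simp
    finally show ?thesis by (simp add: algebra_simps)
  qed
  then show ?case by (simp add: fun_eq_iff)
qed

lemma inner_mul_xy_pow:
  assumes "adj_kernel j h" "adj_kernel j' h'" "j + k = j' + k'"
  shows "inner (j + k) ((mul_xy ^^ k) h) ((mul_xy ^^ k') h')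
     = (if j = j' then fact k * pochhammer (2 * of_nat j + c + c') k * inner j h h' else 0)"
  using assms(3)
proof (induction k arbitrary: k')
  case 0
  show ?case
  proof (cases k')
    case (Suc k'')
    with 0 have j: "j = Suc (j' + k'')" by simp
    have "vanishes_above (j' + k'') ((mul_xy ^^ k'') h')"
      using vanishes_above_mul_xy_pow assms(2) by (auto simp: adj_kernel_def)
    with assms(1) j Suc have "inner j ((mul_xy ^^ k') h') h = 0"
      by (simp add: inner_mul_xy_adj_kernel)
    with j show ?thesis
      using inner_commute[of j h "(mul_xy ^^ k') h'"] by simp
  qed (use 0 in simp)
next
  case (Suc k)
  have "vanishes_above (j + k) ((mul_xy ^^ k) h)"
    using vanishes_above_mul_xy_pow assms(1) by (auto simp: adj_kernel_def)
  then have "inner (j + Suc k) ((mul_xy ^^ Suc k) h) ((mul_xy ^^ k') h')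
      = inner (j + k) ((mul_xy ^^ k) h) (mul_xy_adj (j + k) ((mul_xy ^^ k') h'))"
    using inner_mul_xy by simp
  also have "\<dots> = (if j = j' then fact (Suc k) * pochhammer (2 * of_nat j + c + c') (Suc k) * inner j h h' else 0)"
  proof (cases k')
    case 0
    with Suc.prems have "j' = Suc (j + k)" by simp
    with assms(2) 0 show ?thesis by (simp add: adj_kernel_def inner_zero_right)
  next
    case (Suc k'')
    with Suc.prems have jk: "j + k = j' + k''" by simp
    have "mul_xy_adj (j + k) ((mul_xy ^^ k') h')
        = (\<lambda>p. of_nat (Suc k'') * (2 * of_nat j' + of_nat k'' + c + c') * (mul_xy ^^ k'') h' p)"
      using mul_xy_adj_mul_xy_pow[OF assms(2), of k''] jk Suc by simp
    then have "inner (j + k) ((mul_xy ^^ k) h) (mul_xy_adj (j + k) ((mul_xy ^^ k') h'))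
        = of_nat (Suc k'') * (2 * of_nat j' + of_nat k'' + c + c') * inner (j + k) ((mul_xy ^^ k) h) ((mul_xy ^^ k'') h')"
      by (simp add: inner_scale_right)
    also have "inner (j + k) ((mul_xy ^^ k) h) ((mul_xy ^^ k'') h')
        = (if j = j' then fact k * pochhammer (2 * of_nat j + c + c') k * inner j h h' else 0)"
      using Suc.IH[OF jk] .
    finally show ?thesis
      using jk by (cases "j = j'") (simp_all add: pochhammer_Suc algebra_simps)
  qed
  finally show ?case .
qed

definition kernel_vec :: "nat \<Rightarrow> nat \<Rightarrow> complex" where
  "kernel_vec j q = (- 1) ^ q * of_nat (j choose q) * pochhammer c' j / (pochhammer c q * pochhammer c' (j - q))"

definition hyp2F1_coeff :: "nat \<Rightarrow> nat \<Rightarrow> complex" where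
  "hyp2F1_coeff j m = pochhammer (- of_nat j) m * pochhammer (c + c' + of_nat j - 1) m / (pochhammer c m * fact m)"

lemma vanishes_above_kernel_vec: "vanishes_above j (kernel_vec j)"
  by (auto simp: vanishes_above_def kernel_vec_def binomial_eq_0)

lemma mul_xy_adj_kernel_vec: "mul_xy_adj d (kernel_vec (Suc d)) = (\<lambda>_. 0)"
proof
  fix p
  show "mul_xy_adj d (kernel_vec (Suc d)) p = 0"
  proof (cases "p \<le> d")
    case False
    then show ?thesis by (simp add: mul_xy_adj_def kernel_vec_def binomial_eq_0)
  next
    case True
    then obtain r where d: "d = p + r" using le_iff_add by blast
    define M where "M = (- 1) ^ p * pochhammer c' (Suc d) / (pochhammer c p * pochhammer c' r)"
    have nz: "c + of_nat p \<noteq> 0" "c' + of_nat r \<noteq> 0" "pochhammer c p \<noteq> 0" "pochhammer c' r \<noteq> 0"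
      using c_not_nonpos_int[of p] c'_not_nonpos_int[of r] pochhammer_c_nonzero pochhammer_c'_nonzero
      by (auto simp: add_eq_0_iff)
    have diff: "Suc d - Suc p = r" "Suc d - p = Suc r" "d - p = r" using d by auto
    have "of_nat (Suc p) * (c + of_nat p) * kernel_vec (Suc d) (Suc p) = - (of_nat (Suc p) * of_nat (Suc d choose Suc p) * M)"
      unfolding kernel_vec_def M_def diff pochhammer_Suc[of c p] using nz
      by (simp del: binomial_Suc_Suc of_nat_Suc pochhammer_Suc add: divide_simps mult_ac)
    moreover have "of_nat (Suc r) * (c' + of_nat r) * kernel_vec (Suc d) p = of_nat (Suc r) * of_nat (Suc d choose p) * M"
      unfolding kernel_vec_def M_def diff pochhammer_Suc[of c' r] using nz
      by (simp del: binomial_Suc_Suc of_nat_Suc pochhammer_Suc add: divide_simps mult_ac)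
    moreover have "of_nat (Suc p) * of_nat (Suc d choose Suc p) = (of_nat (Suc r) * of_nat (Suc d choose p) :: complex)"
      unfolding d by (metis Suc_times_binomial_add of_nat_mult)
    ultimately show ?thesis
      unfolding mul_xy_adj_def diff by (simp del: binomial_Suc_Suc of_nat_Suc)
  qed
qed

lemma adj_kernel_kernel_vec: "adj_kernel j (kernel_vec j)"
  by (simp add: adj_kernel_def vanishes_above_kernel_vec mul_xy_adj_kernel_vec)

text \<open>This is the Chu--Vandermonde identity.\<close>

lemma kernel_vec_eq_sum: "kernel_vec j q = (\<Sum>m\<le>j. hyp2F1_coeff j m * monom_binom m (j - m) q)"
proof (cases "q \<le> j")
  case False
  then show ?thesis by (auto simp: kernel_vec_def monom_binom_def binomial_eq_0 intro!: sum.neutral)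
next
  case True
  let ?e = "c + c' + of_nat j - 1"
  have "(\<Sum>m\<le>j. hyp2F1_coeff j m * monom_binom m (j - m) q) = (\<Sum>m\<le>q. hyp2F1_coeff j m * monom_binom m (j - m) q)"
    using True by (intro sum.mono_neutral_right) (auto simp: monom_binom_def)
  also have "\<dots> = of_nat (j choose q)
      * (\<Sum>m=0..q. pochhammer ?e m * pochhammer (- of_nat q) m / (of_nat (fact m) * pochhammer c m))"
    unfolding atMost_atLeast0 sum_distrib_left
  proof (rule sum.cong[OF refl])
    fix m assume m: "m \<in> {0..q}"
    have "(j choose q) * (q choose m) = (j choose m) * ((j - m) choose (q - m))"
      using choose_mult[of m q j] m True by auto
    then have choose: "(of_nat (j choose m) :: complex) * of_nat ((j - m) choose (q - m))
        = of_nat (j choose q) * of_nat (q choose m)"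
      by (metis of_nat_mult)
    show "hyp2F1_coeff j m * monom_binom m (j - m) q
        = of_nat (j choose q) * (pochhammer ?e m * pochhammer (- of_nat q) m / (of_nat (fact m) * pochhammer c m))"
      using m pochhammer_c_nonzero[of m] unfolding hyp2F1_coeff_def monom_binom_def pochhammer_minus_of_nat
      by (auto simp: field_simps choose[symmetric])
  qed
  also have "\<dots> = of_nat (j choose q) * (pochhammer (c - ?e) q / pochhammer c q)"
    using c_not_nonpos_int by (subst Vandermonde_pochhammer) auto
  also have "pochhammer (c - ?e) q = (- 1) ^ q * pochhammer (c' + of_nat (j - q)) q"
    using pochhammer_minus[of "c' + of_nat j - 1" q] True by (simp add: of_nat_diff algebra_simps)
  also have "of_nat (j choose q) * ((- 1) ^ q * pochhammer (c' + of_nat (j - q)) q / pochhammer c q) = kernel_vec j q"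
    using pochhammer_product[of "j - q" j c'] True pochhammer_c_nonzero[of q] pochhammer_c'_nonzero[of "j - q"]
    by (simp add: kernel_vec_def field_simps)
  finally show ?thesis ..
qed

lemma form_eval_powers_kernel_vec:
  "form_eval (power x) (power y) j (kernel_vec j) = hom2F1 j (c + c' + of_nat j - 1) c x y"
proof -
  have "form_eval (power x) (power y) j (kernel_vec j)
      = (\<Sum>m\<le>j. hyp2F1_coeff j m * form_eval (power x) (power y) j (monom_binom m (j - m)))"
    by (simp add: kernel_vec_eq_sum[abs_def] form_eval_sum form_eval_scale)
  also have "\<dots> = (\<Sum>m\<le>j. hyp2F1_coeff j m * (x ^ m * (x + y) ^ (j - m)))"
    by (intro sum.cong) (auto simp: form_eval_powers_monom_binom)
  finally show ?thesis
    by (simp add: hom2F1_def hyp2F1_coeff_def mult_ac)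
qed

lemma form_eval_pochhammer_kernel_vec:
  "form_eval (pochhammer a) (pochhammer a') j (kernel_vec j)
     = (\<Sum>m\<le>j. hyp2F1_coeff j m * (pochhammer a m * pochhammer (a + a' + of_nat m) (j - m)))"
proof -
  have "form_eval (pochhammer a) (pochhammer a') j (kernel_vec j)
      = (\<Sum>m\<le>j. hyp2F1_coeff j m * form_eval (pochhammer a) (pochhammer a') j (monom_binom m (j - m)))"
    by (simp add: kernel_vec_eq_sum[abs_def] form_eval_sum form_eval_scale)
  also have "\<dots> = (\<Sum>m\<le>j. hyp2F1_coeff j m * (pochhammer a m * pochhammer (a + a' + of_nat m) (j - m)))"
    by (intro sum.cong) (auto simp: form_eval_pochhammer_monom_binom)
  finally show ?thesis .
qed

lemma coeffD_eq_form_eval: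
  assumes "\<And>n::nat. a + a' \<noteq> - of_nat n"
  shows "coeffD a a' c c' j = form_eval (pochhammer a) (pochhammer a') j (kernel_vec j) * pochhammer c j
           / (fact j * pochhammer c' j * pochhammer (c + c' + of_nat j - 1) j)"
proof -
  have nz: "pochhammer (a + a') m \<noteq> 0" for m
    using assms by (auto simp: pochhammer_eq_0_iff)
  have "pochhammer (a + a') j * hyp3F2_term j a (c + c' + of_nat j - 1) (a + a') c
      = (\<Sum>m\<le>j. hyp2F1_coeff j m * (pochhammer a m * pochhammer (a + a' + of_nat m) (j - m)))"
    unfolding hyp3F2_term_def sum_distrib_left
  proof (rule sum.cong[OF refl])
    fix m assume "m \<in> {..j}"
    then have "pochhammer (a + a') j = pochhammer (a + a') m * pochhammer (a + a' + of_nat m) (j - m)"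
      using pochhammer_product[of m j "a + a'"] by simp
    then show "pochhammer (a + a') j *
         (pochhammer (- of_nat j) m * pochhammer a m * pochhammer (c + c' + of_nat j - 1) m /
          (pochhammer (a + a') m * pochhammer c m * fact m)) =
         hyp2F1_coeff j m * (pochhammer a m * pochhammer (a + a' + of_nat m) (j - m))"
      unfolding hyp2F1_coeff_def using nz[of m] pochhammer_c_nonzero[of m] by (simp add: field_simps)
  qed
  then show ?thesis
    unfolding coeffD_def form_eval_pochhammer_kernel_vec[symmetric] by (simp add: field_simps)
qed

lemma inner_kernel_vec_self:
  "inner j (kernel_vec j) (kernel_vec j) = fact j * pochhammer (c + c' + of_nat j - 1) j * pochhammer c' j / pochhammer c j"
proof (cases j)
  case 0
  then show ?thesis by (simp add: inner_def kernel_vec_def weight_def)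
next
  case (Suc d)
  define R where "R = (\<lambda>q. \<Sum>m\<le>d. hyp2F1_coeff j m * monom_binom m (d - m) q)"
  have split: "kernel_vec j q = hyp2F1_coeff j j * monom_binom j 0 q + mul_xy R q" for q
    unfolding kernel_vec_eq_sum R_def mul_xy_sum mul_xy_scale Suc
    by (simp add: Suc_diff_le mul_xy_monom_binom)
  have "vanishes_above d R"
    unfolding R_def vanishes_above_def monom_binom_def by (auto simp: binomial_eq_0 intro!: sum.neutral)
  then have "inner j (mul_xy R) (kernel_vec j) = 0"
    using inner_mul_xy_adj_kernel[OF adj_kernel_kernel_vec] Suc by simp
  moreover have "inner j (monom_binom j 0) (kernel_vec j) = kernel_vec j j * weight j j"
  proof -
    have "inner j (monom_binom j 0) (kernel_vec j) = (\<Sum>p\<in>{j}. monom_binom j 0 p * kernel_vec j p * weight j p)"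
      unfolding inner_def by (rule sum.mono_neutral_right) (auto simp: monom_binom_def)
    then show ?thesis by (simp add: monom_binom_def)
  qed
  moreover have "inner j (kernel_vec j) g = hyp2F1_coeff j j * inner j (monom_binom j 0) g + inner j (mul_xy R) g" for g
    by (simp add: inner_def split sum.distrib sum_distrib_left algebra_simps)
  ultimately have "inner j (kernel_vec j) (kernel_vec j) = hyp2F1_coeff j j * (kernel_vec j j * weight j j)"
    by simp
  also have "\<dots> = fact j * pochhammer (c + c' + of_nat j - 1) j * pochhammer c' j / pochhammer c j"
  proof -
    have "((- 1) ^ j * (- 1) ^ j :: complex) = 1" by (simp flip: power_mult_distrib)
    then show ?thesis
      unfolding hyp2F1_coeff_def kernel_vec_def weight_def pochhammer_same
      using pochhammer_c_nonzero[of j] by (simp add: field_simps)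
  qed
  finally show ?thesis .
qed

definition basis :: "nat \<Rightarrow> nat \<Rightarrow> nat \<Rightarrow> complex" where
  "basis N j = (mul_xy ^^ (N - j)) (kernel_vec j)"

definition basis_sqnorm :: "nat \<Rightarrow> nat \<Rightarrow> complex" where
  "basis_sqnorm N j = fact (N - j) * pochhammer (c + c' + 2 * of_nat j) (N - j)
     * (fact j * pochhammer (c + c' + of_nat j - 1) j * pochhammer c' j / pochhammer c j)"

lemma pochhammer_cc'_double_nonzero: "pochhammer (c + c' + 2 * of_nat j) n \<noteq> 0"
  using pochhammer_cc'_nonzero[of "2 * j" n] by simp

lemma cc'_double_not_nonpos_int: "c + c' + 2 * of_nat j \<noteq> - of_nat n"
proof
  assume "c + c' + 2 * of_nat j = - of_nat n"
  then have "c + c' = - of_nat (n + 2 * j)" by (simp add: algebra_simps)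
  then show False using cc'_not_nonpos_int by blast
qed

lemma basis_sqnorm_nonzero: "basis_sqnorm N j \<noteq> 0"
  using pochhammer_cc'_pred_nonzero[of j] pochhammer_cc'_double_nonzero[of j "N - j"]
    pochhammer_c_nonzero[of j] pochhammer_c'_nonzero[of j]
  by (simp add: basis_sqnorm_def)

lemma inner_basis:
  "i \<le> N \<Longrightarrow> j \<le> N \<Longrightarrow>
     inner N (basis N i) (basis N j) = (if i = j then basis_sqnorm N j else 0)"
  using inner_mul_xy_pow[OF adj_kernel_kernel_vec adj_kernel_kernel_vec, of i "N - i" j "N - j"]
  by (simp add: basis_def basis_sqnorm_def inner_kernel_vec_self add_ac)

text \<open>Orthogonality of the \<open>N + 1\<close> basis vectors says that a certain square matrix has a right
  inverse; that it is also a left inverse is the completeness relation.\<close>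

lemma basis_complete:
  assumes "p \<le> N" "q \<le> N"
  shows "(\<Sum>j\<le>N. basis N j p * basis N j q / basis_sqnorm N j) = (if p = q then 1 / weight N p else 0)"
proof -
  define X where "X = mat (Suc N) (Suc N) (\<lambda>(i, p). basis N i p)"
  define Y where "Y = mat (Suc N) (Suc N) (\<lambda>(p, j). weight N p * basis N j p / basis_sqnorm N j)"
  have X: "X \<in> carrier_mat (Suc N) (Suc N)" and Y: "Y \<in> carrier_mat (Suc N) (Suc N)"
    by (simp_all add: X_def Y_def)
  have "X * Y = 1\<^sub>m (Suc N)"
  proof (rule eq_matI)
    fix i j assume ij: "i < dim_row (1\<^sub>m (Suc N))" "j < dim_col (1\<^sub>m (Suc N))"
    then have "(X * Y) $$ (i, j) = (\<Sum>k<Suc N. basis N i k * (weight N k * basis N j k / basis_sqnorm N j))"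
      by (simp add: X_def Y_def scalar_prod_def atLeast0LessThan)
    also have "\<dots> = inner N (basis N i) (basis N j) / basis_sqnorm N j"
      unfolding inner_def lessThan_Suc_atMost by (simp add: sum_divide_distrib mult_ac)
    finally show "(X * Y) $$ (i, j) = 1\<^sub>m (Suc N) $$ (i, j)"
      using ij inner_basis[of i N j] basis_sqnorm_nonzero[of N j] by simp
  qed (simp_all add: X_def Y_def)
  then have "Y * X = 1\<^sub>m (Suc N)"
    by (rule mat_mult_left_right_inverse[OF X Y])
  moreover have "(Y * X) $$ (p, q) = (\<Sum>j<Suc N. weight N p * basis N j p / basis_sqnorm N j * basis N j q)"
    using assms by (simp add: X_def Y_def scalar_prod_def atLeast0LessThan)
  ultimately have "(\<Sum>j\<le>N. weight N p * (basis N j p * basis N j q / basis_sqnorm N j)) = (if p = q then 1 else 0)"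
    using assms unfolding lessThan_Suc_atMost by (simp add: mult.assoc)
  then have "weight N p * (\<Sum>j\<le>N. basis N j p * basis N j q / basis_sqnorm N j) = (if p = q then 1 else 0)"
    by (simp add: sum_distrib_left)
  then show ?thesis
    using weight_nonzero[of N p] by (auto simp: eq_divide_eq mult.commute)
qed

end

section \<open>The identity in each degree\<close>

definition hyp1F1_term :: "complex \<Rightarrow> complex \<Rightarrow> complex \<Rightarrow> nat \<Rightarrow> complex" where
  "hyp1F1_term a c z n = pochhammer a n / (pochhammer c n * fact n) * z ^ n"

context pochhammer_weight
begin

lemma form_eval_powers_basis:
  "j \<le> N \<Longrightarrow> form_eval (power x) (power y) N (basis N j)
     = (x + y) ^ (N - j) * hom2F1 j (c + c' + of_nat j - 1) c x y"
  using form_eval_powers_mul_xy_pow[of j "kernel_vec j" x y "N - j"] vanishes_above_kernel_vec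
  by (simp add: basis_def form_eval_powers_kernel_vec)

lemma form_eval_pochhammer_basis:
  "j \<le> N \<Longrightarrow> form_eval (pochhammer a) (pochhammer a') N (basis N j)
     = pochhammer (a + a' + of_nat j) (N - j) * form_eval (pochhammer a) (pochhammer a') j (kernel_vec j)"
  using form_eval_pochhammer_mul_xy_pow[of j "kernel_vec j" a a' "N - j"] vanishes_above_kernel_vec
  by (simp add: basis_def)

lemma expansion_term_eq:
  assumes "\<And>n::nat. a + a' \<noteq> - of_nat n" and "j \<le> N"
  shows "coeffD a a' c c' j * hom2F1 j (c + c' + of_nat j - 1) c x y
      * hyp1F1_term (a + a' + of_nat j) (c + c' + 2 * of_nat j) (x + y) (N - j)
    = form_eval (pochhammer a) (pochhammer a') N (basis N j) * form_eval (power x) (power y) N (basis N j) / basis_sqnorm N j"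
  unfolding form_eval_powers_basis[OF assms(2)] form_eval_pochhammer_basis[OF assms(2)]
    coeffD_eq_form_eval[OF assms(1)] basis_sqnorm_def hyp1F1_term_def
  using pochhammer_cc'_pred_nonzero[of j] pochhammer_cc'_double_nonzero[of j "N - j"]
    pochhammer_c_nonzero[of j] pochhammer_c'_nonzero[of j]
  by (simp add: field_simps)

lemma coefficient_identity:
  assumes "\<And>n::nat. a + a' \<noteq> - of_nat n"
  shows "(\<Sum>i\<le>N. hyp1F1_term a c x i * hyp1F1_term a' c' y (N - i))
       = (\<Sum>j\<le>N. coeffD a a' c c' j * hom2F1 j (c + c' + of_nat j - 1) c x y
           * hyp1F1_term (a + a' + of_nat j) (c + c' + 2 * of_nat j) (x + y) (N - j))"
proof -
  have "(\<Sum>j\<le>N. coeffD a a' c c' j * hom2F1 j (c + c' + of_nat j - 1) c x y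
           * hyp1F1_term (a + a' + of_nat j) (c + c' + 2 * of_nat j) (x + y) (N - j))
      = (\<Sum>j\<le>N. form_eval (pochhammer a) (pochhammer a') N (basis N j) * form_eval (power x) (power y) N (basis N j)
           / basis_sqnorm N j)"
    using expansion_term_eq[OF assms] by simp
  also have "\<dots> = (\<Sum>j\<le>N. (\<Sum>q\<le>N. basis N j q * (pochhammer a q * pochhammer a' (N - q)))
                      * (\<Sum>p\<le>N. basis N j p * (x ^ p * y ^ (N - p))) / basis_sqnorm N j)"
    by (simp add: form_eval_def mult.assoc)
  also have "\<dots> = (\<Sum>p\<le>N. x ^ p * y ^ (N - p) * (pochhammer a p * pochhammer a' (N - p)) / weight N p)"
    by (rule parseval_of_completeness[OF basis_complete])
  also have "\<dots> = (\<Sum>i\<le>N. hyp1F1_term a c x i * hyp1F1_term a' c' y (N - i))"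
    by (intro sum.cong refl) (simp add: weight_def hyp1F1_term_def divide_inverse mult_ac)
  finally show ?thesis ..
qed

end

section \<open>Convergence\<close>

lemma norm_pochhammer_le:
  assumes "norm z + 1 \<le> A"
  shows "norm (pochhammer (z :: complex) n) \<le> A ^ n * fact n"
proof -
  have A: "1 \<le> A" using assms norm_ge_zero[of z] by linarith
  show ?thesis
  proof (induction n)
    case (Suc n)
    have "real n \<le> A * real n" using A by (simp add: mult_le_cancel_right1)
    moreover have "norm (z + of_nat n) \<le> norm z + of_nat n"
      using norm_triangle_ineq[of z "of_nat n"] by simp
    moreover have "A * (of_nat n + 1) = A * real n + A" by (simp add: algebra_simps)
    ultimately have "norm (z + of_nat n) \<le> A * (of_nat n + 1)"
      using assms by linarith
    then have "norm (pochhammer z n) * norm (z + of_nat n) \<le> (A ^ n * fact n) * (A * (of_nat n + 1))"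
      using Suc A by (intro mult_mono) auto
    then show ?case by (simp only: pochhammer_Suc norm_mult) (simp add: algebra_simps)
  qed simp
qed

lemma shifts_bounded_below:
  fixes z :: complex
  assumes "\<And>n::nat. z \<noteq> - of_nat n"
  shows "\<exists>\<mu>>0. \<forall>n. \<mu> * (of_nat n + 1) \<le> norm (z + of_nat n)"
proof -
  define K where "K = nat \<lceil>2 * norm z\<rceil> + 1"
  define m where "m = Min ((\<lambda>n. norm (z + of_nat n) / (of_nat n + 1)) ` {..<K})"
  have pos: "0 < norm (z + of_nat n) / (of_nat n + 1)" for n
  proof -
    have "z + of_nat n \<noteq> 0" using assms[of n] by (auto simp: add_eq_0_iff)
    then show ?thesis by (auto intro!: divide_pos_pos)
  qed
  have "m \<in> (\<lambda>n. norm (z + of_nat n) / (of_nat n + 1)) ` {..<K}"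
    unfolding m_def K_def by (intro Min_in) auto
  then have m: "m > 0" "\<And>n. n < K \<Longrightarrow> m \<le> norm (z + of_nat n) / (of_nat n + 1)"
    using pos unfolding m_def by auto
  define \<mu> where "\<mu> = min (1/4) m"
  have "\<mu> * (of_nat n + 1) \<le> norm (z + of_nat n)" for n
  proof (cases "n < K")
    case True
    then have "\<mu> * (of_nat n + 1) \<le> m * (of_nat n + 1)" by (intro mult_right_mono) (auto simp: \<mu>_def)
    also have "\<dots> \<le> norm (z + of_nat n)" using m(2)[OF True] by (simp add: field_simps)
    finally show ?thesis .
  next
    case False
    then have "real n \<ge> 2 * norm z + 1" unfolding K_def by linarith
    moreover have "real n \<le> norm (z + of_nat n) + norm z"
      using norm_triangle_ineq4[of "z + of_nat n" z] by simp
    ultimately have "real n + 1 \<le> 4 * norm (z + of_nat n)"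
      using norm_ge_zero[of z] by linarith
    moreover have "(4 * \<mu>) * (real n + 1) \<le> 1 * (real n + 1)"
      by (intro mult_right_mono) (auto simp: \<mu>_def)
    then have "4 * (\<mu> * (real n + 1)) \<le> real n + 1"
      by (simp only: mult.assoc mult_1)
    ultimately show ?thesis by linarith
  qed
  moreover have "\<mu> > 0" using m by (simp add: \<mu>_def)
  ultimately show ?thesis by blast
qed

lemma norm_pochhammer_ge:
  assumes "0 \<le> \<mu>" "\<And>n. \<mu> * (of_nat n + 1) \<le> norm (z + of_nat n)"
  shows "\<mu> ^ n * fact n \<le> norm (pochhammer (z + of_nat m :: complex) n)"
proof (induction n)
  case (Suc n)
  have "\<mu> * (of_nat n + 1) \<le> \<mu> * (of_nat (m + n) + 1)" using assms(1) by (intro mult_left_mono) auto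
  also have "\<dots> \<le> norm (z + of_nat m + of_nat n)" using assms(2)[of "m + n"] by (simp add: add.assoc)
  finally have "(\<mu> ^ n * fact n) * (\<mu> * (of_nat n + 1))
      \<le> norm (pochhammer (z + of_nat m) n) * norm (z + of_nat m + of_nat n)"
    using Suc assms(1) by (intro mult_mono) auto
  then show ?case by (simp only: pochhammer_Suc norm_mult) (simp add: algebra_simps)
qed simp

lemma norm_shift_le_ratio:
  fixes u v :: complex
  assumes "\<mu> > 0" "\<And>n. \<mu> * (of_nat n + 1) \<le> norm (v + of_nat n)" "m \<le> l"
  shows "norm (u + of_nat m) \<le> (norm u + 1) / \<mu> * norm (v + of_nat l)"
proof -
  have "norm (u + of_nat m) \<le> norm u + of_nat m"
    using norm_triangle_ineq[of u "of_nat m"] by simp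
  also have "\<dots> \<le> (norm u + 1) * (of_nat l + 1)"
  proof -
    have "0 \<le> norm u * real l" "real m \<le> real l"
      using assms(3) by simp_all
    moreover have "(norm u + 1) * (real l + 1) = norm u * real l + norm u + real l + 1"
      by (simp add: algebra_simps)
    ultimately show ?thesis by linarith
  qed
  also have "\<dots> = (norm u + 1) / \<mu> * (\<mu> * (of_nat l + 1))"
    using assms(1) by simp
  also have "\<dots> \<le> (norm u + 1) / \<mu> * norm (v + of_nat l)"
    using assms(1,2) by (intro mult_left_mono) auto
  finally show ?thesis .
qed

lemma norm_hyp1F1_term_le:
  assumes "r \<ge> 0" "\<And>i. norm (u + of_nat i) \<le> r * norm (v + of_nat i)" "pochhammer v n \<noteq> 0"
  shows "norm (hyp1F1_term u v z n) \<le> (r * norm z) ^ n / fact n"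
proof -
  have "norm (pochhammer u n) \<le> r ^ n * norm (pochhammer v n)"
  proof (induction n)
    case (Suc n)
    then have "norm (pochhammer u n) * norm (u + of_nat n) \<le> (r ^ n * norm (pochhammer v n)) * (r * norm (v + of_nat n))"
      using assms(1,2) by (intro mult_mono) auto
    then show ?case by (simp only: pochhammer_Suc norm_mult) (simp add: algebra_simps)
  qed simp
  then have "norm (pochhammer u n) / norm (pochhammer v n) \<le> r ^ n"
    using assms(3) by (simp add: divide_le_eq)
  then have "norm (pochhammer u n) / norm (pochhammer v n) * norm z ^ n / fact n \<le> r ^ n * norm z ^ n / fact n"
    by (intro divide_right_mono mult_right_mono) auto
  then show ?thesis by (simp add: hyp1F1_term_def norm_mult norm_divide norm_power power_mult_distrib)
qed

lemma summable_exp_terms: "summable (\<lambda>n. (t :: real) ^ n / fact n)"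
  using summable_exp[of t] by (simp add: field_simps)

lemma hyp1F1_term_sums:
  assumes "\<And>n::nat. c \<noteq> - of_nat n"
  shows "summable (\<lambda>n. norm (hyp1F1_term a c z n))" and "hyp1F1_term a c z sums hyp1F1 a c z"
proof -
  obtain \<mu> where \<mu>: "\<mu> > 0" "\<And>n. \<mu> * (of_nat n + 1) \<le> norm (c + of_nat n)"
    using shifts_bounded_below[OF assms] by blast
  have "pochhammer c n \<noteq> 0" for n
    using assms by (auto simp: pochhammer_eq_0_iff)
  with norm_shift_le_ratio[OF \<mu>, where u = a] \<mu>(1)
  have bound: "norm (hyp1F1_term a c z n) \<le> ((norm a + 1) / \<mu> * norm z) ^ n / fact n" for n
    by (intro norm_hyp1F1_term_le) auto
  show summable: "summable (\<lambda>n. norm (hyp1F1_term a c z n))"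
    by (rule summable_comparison_test'[OF summable_exp_terms[of "(norm a + 1) / \<mu> * norm z"], where N = 0])
      (use bound in simp)
  have "hyp1F1 a c z = suminf (hyp1F1_term a c z)"
    by (simp add: hyp1F1_def hyp1F1_term_def[abs_def])
  then show "hyp1F1_term a c z sums hyp1F1 a c z"
    using summable_sums[OF summable_norm_cancel[OF summable]] by simp
qed

lemma hyp1F1_product_sums:
  assumes "\<And>n::nat. c \<noteq> - of_nat n" "\<And>n::nat. c' \<noteq> - of_nat n"
  shows "(\<lambda>N. \<Sum>i\<le>N. hyp1F1_term a c x i * hyp1F1_term a' c' y (N - i)) sums (hyp1F1 a c x * hyp1F1 a' c' y)"
  using Cauchy_product_sums[OF hyp1F1_term_sums(1)[OF assms(1)] hyp1F1_term_sums(1)[OF assms(2)]]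
    sums_unique[OF hyp1F1_term_sums(2)[OF assms(1)]] sums_unique[OF hyp1F1_term_sums(2)[OF assms(2)]]
  by simp

lemma abs_summable_on_product_bound:
  fixes T :: "nat \<Rightarrow> nat \<Rightarrow> 'a::real_normed_vector"
  assumes "\<And>j k. norm (T j k) \<le> f j * g k" "summable f" "summable g" "\<And>j. 0 \<le> f j" "\<And>k. 0 \<le> g k"
  shows "(\<lambda>p. norm (case_prod T p)) summable_on UNIV"
proof -
  have f: "(f has_sum suminf f) UNIV" and g: "(g has_sum suminf g) UNIV"
    using assms(2-5) by (auto intro!: sums_nonneg_imp_has_sum summable_sums)
  have "(\<lambda>(j, k). f j * g k) summable_on Sigma UNIV (\<lambda>_. UNIV)"
  proof (rule summable_on_SigmaI)
    show "((\<lambda>k. case (j, k) of (j, k) \<Rightarrow> f j * g k) has_sum f j * suminf g) UNIV" for j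
      using has_sum_cmult_right[OF g, of "f j"] by simp
    show "(\<lambda>j. f j * suminf g) summable_on UNIV"
      using has_sum_cmult_left[OF f] by (auto simp: summable_on_def)
  qed (simp add: assms(4,5))
  then have "(\<lambda>(j, k). f j * g k) summable_on UNIV"
    by simp
  then show ?thesis
    by (rule Infinite_Sum.abs_summable_on_comparison_test') (auto simp: assms(1) split: prod.split)
qed

lemma sums_of_row_sums:
  fixes T :: "nat \<Rightarrow> nat \<Rightarrow> complex"
  assumes "(\<lambda>p. norm (case_prod T p)) summable_on UNIV"
    and rows: "\<And>j. T j sums R j"
    and diagonals: "(\<lambda>N. \<Sum>j\<le>N. T j (N - j)) sums S"
  shows "R sums S"
proof -
  have summable: "case_prod T summable_on UNIV"
    by (rule abs_summable_summable[OF assms(1)])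
  then obtain S' where S': "(case_prod T has_sum S') UNIV"
    using has_sum_infsum by blast
  have row_has_sum: "(T j has_sum R j) UNIV" for j
  proof -
    have "T j summable_on UNIV"
      using summable_on_SigmaD1[of T UNIV "\<lambda>_. UNIV" j] summable by simp
    then have "(T j has_sum infsum (T j) UNIV) UNIV"
      using has_sum_infsum by blast
    moreover have "infsum (T j) UNIV = R j"
      using sums_unique2[OF has_sum_imp_sums[OF calculation] rows[of j]] .
    ultimately show ?thesis by simp
  qed
  have "(case_prod T has_sum S') (Sigma UNIV (\<lambda>_. UNIV))"
    using S' by simp
  then have "(R has_sum S') UNIV"
    by (rule has_sum_Sigma') (simp add: row_has_sum)
  moreover have "((\<lambda>N. \<Sum>j\<le>N. T j (N - j)) has_sum S') UNIV"
  proof -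
    have "(case_prod T has_sum S') UNIV = ((\<lambda>(N, j). T j (N - j)) has_sum S') (Sigma UNIV (\<lambda>N. {..N}))"
      by (rule has_sum_reindex_bij_witness[where j = "\<lambda>(j, k). (j + k, j)" and i = "\<lambda>(N, j). (j, N - j)"])
        auto
    with S' have "((\<lambda>(N, j). T j (N - j)) has_sum S') (Sigma UNIV (\<lambda>N. {..N}))"
      by simp
    then show ?thesis
      by (rule has_sum_Sigma') auto
  qed
  then have "S' = S"
    using sums_unique2[OF has_sum_imp_sums diagonals] by blast
  ultimately show ?thesis
    using has_sum_imp_sums by blast
qed

lemma norm_form_eval_le:
  assumes "\<And>q. norm (f q) \<le> B" "\<And>p. p \<le> d \<Longrightarrow> norm (u p * v (d - p)) \<le> M"
  shows "norm (form_eval u v d f) \<le> 2 ^ d * B * M"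
proof -
  have B: "0 \<le> B" using assms(1)[of 0] norm_ge_zero order_trans by blast
  have M: "0 \<le> M" using assms(2)[of 0] norm_ge_zero order_trans by blast
  have "norm (form_eval u v d f) \<le> (\<Sum>p\<le>d. norm (f p) * norm (u p * v (d - p)))"
    unfolding form_eval_def by (rule order_trans[OF norm_sum]) (simp add: norm_mult mult.assoc)
  also have "\<dots> \<le> (\<Sum>p\<le>d. B * M)"
    by (intro sum_mono mult_mono assms) (auto simp: B)
  also have "\<dots> = real (Suc d) * (B * M)"
    by simp
  also have "\<dots> \<le> 2 ^ d * (B * M)"
    by (intro mult_right_mono Suc_le_power2) (simp add: B M)
  finally show ?thesis by (simp add: mult.assoc)
qed

lemma norm_form_eval_powers_le:
  assumes "\<And>q. norm (f q) \<le> B" "norm x \<le> R" "norm y \<le> R"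
  shows "norm (form_eval (power x) (power y) d f) \<le> 2 ^ d * B * R ^ d"
proof (rule norm_form_eval_le[OF assms(1)])
  fix p assume p: "p \<le> d"
  have "0 \<le> R"
    using assms(2) norm_ge_zero order_trans by blast
  with assms(2,3) have "norm (x ^ p * y ^ (d - p)) \<le> R ^ p * R ^ (d - p)"
    unfolding norm_mult norm_power by (intro mult_mono power_mono) auto
  also have "\<dots> = R ^ d"
    using p by (simp flip: power_add)
  finally show "norm (x ^ p * y ^ (d - p)) \<le> R ^ d" .
qed

lemma norm_form_eval_pochhammer_le:
  assumes "\<And>q. norm (f q) \<le> B" "0 \<le> A"
    and "\<And>n. norm (pochhammer a n) \<le> A ^ n * fact n" "\<And>n. norm (pochhammer a' n) \<le> A ^ n * fact n"
  shows "norm (form_eval (pochhammer a) (pochhammer a') d f) \<le> 2 ^ d * B * (A ^ d * fact d)"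
proof (rule norm_form_eval_le[OF assms(1)])
  fix p assume p: "p \<le> d"
  have "norm (pochhammer a p * pochhammer a' (d - p)) \<le> (A ^ p * fact p) * (A ^ (d - p) * fact (d - p))"
    unfolding norm_mult using assms(2-4) by (intro mult_mono) auto
  also have "\<dots> = A ^ d * (fact p * fact (d - p))"
    using p by (simp add: mult_ac flip: power_add)
  also have "\<dots> \<le> A ^ d * fact d"
    using assms(2) p by (intro mult_left_mono fact_mult_fact_le) auto
  finally show "norm (pochhammer a p * pochhammer a' (d - p)) \<le> A ^ d * fact d" .
qed

context pochhammer_weight
begin

lemma shifts_bounded_below_common:
  "\<exists>\<mu>>0. \<forall>n. \<mu> * (of_nat n + 1) \<le> norm (c + of_nat n)
     \<and> \<mu> * (of_nat n + 1) \<le> norm (c' + of_nat n) \<and> \<mu> * (of_nat n + 1) \<le> norm (c + c' + of_nat n)"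
proof -
  obtain \<mu>1 where \<mu>1: "\<mu>1 > 0" "\<And>n. \<mu>1 * (of_nat n + 1) \<le> norm (c + of_nat n)"
    using shifts_bounded_below[OF c_not_nonpos_int] by blast
  obtain \<mu>2 where \<mu>2: "\<mu>2 > 0" "\<And>n. \<mu>2 * (of_nat n + 1) \<le> norm (c' + of_nat n)"
    using shifts_bounded_below[OF c'_not_nonpos_int] by blast
  obtain \<mu>3 where \<mu>3: "\<mu>3 > 0" "\<And>n. \<mu>3 * (of_nat n + 1) \<le> norm (c + c' + of_nat n)"
    using shifts_bounded_below[OF cc'_not_nonpos_int] by blast
  define \<mu> where "\<mu> = min \<mu>1 (min \<mu>2 \<mu>3)"
  have le: "\<mu> * (of_nat n + 1) \<le> \<nu> * (of_nat n + 1)" if "\<mu> \<le> \<nu>" for \<nu> n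
    using that by (intro mult_right_mono) auto
  have "\<mu> * (of_nat n + 1) \<le> norm (c + of_nat n)" "\<mu> * (of_nat n + 1) \<le> norm (c' + of_nat n)"
    "\<mu> * (of_nat n + 1) \<le> norm (c + c' + of_nat n)" for n
    using order_trans[OF le \<mu>1(2)] order_trans[OF le \<mu>2(2)] order_trans[OF le \<mu>3(2)]
    by (simp_all add: \<mu>_def)
  moreover have "\<mu> > 0"
    using \<mu>1 \<mu>2 \<mu>3 by (simp add: \<mu>_def)
  ultimately show ?thesis by blast
qed

lemma hyp1F1_row_bound:
  "\<exists>Q\<ge>0. \<forall>j k. norm (hyp1F1_term (a + a' + of_nat j) (c + c' + 2 * of_nat j) z k) \<le> Q ^ k / fact k"
proof -
  obtain \<mu> where \<mu>: "\<mu> > 0" "\<And>n. \<mu> * (of_nat n + 1) \<le> norm (c + c' + of_nat n)"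
    using shifts_bounded_below[OF cc'_not_nonpos_int] by blast
  define r where "r = (norm (a + a') + 1) / \<mu>"
  have r: "0 \<le> r"
    using \<mu>(1) by (simp add: r_def)
  have ratio: "norm (a + a' + of_nat j + of_nat i) \<le> r * norm (c + c' + 2 * of_nat j + of_nat i)" for j i
  proof -
    have "norm (a + a' + of_nat (j + i)) \<le> r * norm (c + c' + of_nat (2 * j + i))"
      unfolding r_def by (rule norm_shift_le_ratio[OF \<mu>]) simp
    then show ?thesis by (simp add: add.assoc)
  qed
  have "norm (hyp1F1_term (a + a' + of_nat j) (c + c' + 2 * of_nat j) z k) \<le> (r * norm z) ^ k / fact k" for j k
    by (rule norm_hyp1F1_term_le[OF r ratio pochhammer_cc'_double_nonzero])
  with r show ?thesis
    by (intro exI[of _ "r * norm z"]) simp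
qed

lemma norm_kernel_vec_le:
  assumes "0 \<le> A" "0 < \<mu>"
    and upper: "\<And>n. norm (pochhammer c' n) \<le> A ^ n * fact n"
    and lower: "\<And>n. \<mu> ^ n * fact n \<le> norm (pochhammer c n)"
      "\<And>n. \<mu> ^ n * fact n \<le> norm (pochhammer c' n)"
  shows "norm (kernel_vec j q) \<le> (4 * A / \<mu>) ^ j"
proof (cases "q \<le> j")
  case False
  then show ?thesis using assms by (simp add: kernel_vec_def binomial_eq_0)
next
  case True
  have choose: "real (j choose q) \<le> 2 ^ j"
    using binomial_le_pow2[of j q] by (metis of_nat_le_iff of_nat_numeral of_nat_power)
  have fact: "fact j = real (j choose q) * (fact q * fact (j - q))"
    using binomial_fact[OF True, where 'a = real] by (simp add: field_simps)
  have "\<mu> ^ q * fact q * (\<mu> ^ (j - q) * fact (j - q)) \<le> norm (pochhammer c q) * norm (pochhammer c' (j - q))"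
    using assms(2) by (intro mult_mono lower) auto
  moreover have "0 < \<mu> ^ q * fact q * (\<mu> ^ (j - q) * fact (j - q))"
    using assms(2) by simp
  moreover have "norm (kernel_vec j q)
      = real (j choose q) * norm (pochhammer c' j) / (norm (pochhammer c q) * norm (pochhammer c' (j - q)))"
    by (simp add: kernel_vec_def norm_mult norm_divide norm_power)
  ultimately have "norm (kernel_vec j q)
      \<le> real (j choose q) * (A ^ j * fact j) / (\<mu> ^ q * fact q * (\<mu> ^ (j - q) * fact (j - q)))"
    using upper[of j] assms(1) by (auto intro!: frac_le mult_left_mono)
  also have "\<dots> = real (j choose q) * real (j choose q) * A ^ j / \<mu> ^ j"
    using True assms(2) unfolding fact by (simp add: field_simps flip: power_add)
  also have "\<dots> \<le> 2 ^ j * 2 ^ j * A ^ j / \<mu> ^ j"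
    using assms by (intro divide_right_mono mult_right_mono mult_mono choose) auto
  also have "\<dots> = (4 * A / \<mu>) ^ j"
  proof -
    have "(2 :: real) ^ j * 2 ^ j = 4 ^ j" by (simp flip: power_mult_distrib)
    then show ?thesis by (simp add: power_divide power_mult_distrib)
  qed
  finally show ?thesis .
qed

lemma norm_coeff_le:
  assumes ab: "\<And>n::nat. a + a' \<noteq> - of_nat n"
    and A: "1 \<le> A" and \<mu>: "0 < \<mu>" and K: "0 \<le> K"
    and upper: "\<And>z n. z \<in> {a, a', c, c'} \<Longrightarrow> norm (pochhammer z n) \<le> A ^ n * fact n"
    and lower: "\<mu> ^ j * fact j \<le> norm (pochhammer c' j)"
      "\<mu> ^ j * fact j \<le> norm (pochhammer (c + c' + of_nat j - 1) j)"
    and kernel: "\<And>q. norm (kernel_vec j q) \<le> K ^ j"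
    and R: "norm x \<le> R" "norm y \<le> R"
  shows "norm (coeffD a a' c c' j * hom2F1 j (c + c' + of_nat j - 1) c x y)
     \<le> ((2 * K * A) * A * (2 * K * R) / (\<mu> * \<mu>)) ^ j / fact j"
proof -
  have R0: "0 \<le> R" using R(1) norm_ge_zero order_trans by blast
  have P: "norm (form_eval (pochhammer a) (pochhammer a') j (kernel_vec j)) \<le> 2 ^ j * K ^ j * (A ^ j * fact j)"
    using A upper by (intro norm_form_eval_pochhammer_le[OF kernel]) auto
  have E: "norm (form_eval (power x) (power y) j (kernel_vec j)) \<le> 2 ^ j * K ^ j * R ^ j"
    by (rule norm_form_eval_powers_le[OF kernel R])
  have denom: "fact j * (\<mu> ^ j * fact j) * (\<mu> ^ j * fact j)
      \<le> fact j * norm (pochhammer c' j) * norm (pochhammer (c + c' + of_nat j - 1) j)"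
    using \<mu> by (intro mult_mono lower order_refl) auto
  have "norm (coeffD a a' c c' j * hom2F1 j (c + c' + of_nat j - 1) c x y)
      = norm (form_eval (pochhammer a) (pochhammer a') j (kernel_vec j)) * norm (pochhammer c j)
        / (fact j * norm (pochhammer c' j) * norm (pochhammer (c + c' + of_nat j - 1) j))
        * norm (form_eval (power x) (power y) j (kernel_vec j))"
    unfolding coeffD_eq_form_eval[OF ab] form_eval_powers_kernel_vec[symmetric]
    by (simp add: norm_mult norm_divide)
  also have "\<dots> \<le> (2 ^ j * K ^ j * (A ^ j * fact j)) * (A ^ j * fact j)
        / (fact j * (\<mu> ^ j * fact j) * (\<mu> ^ j * fact j)) * (2 ^ j * K ^ j * R ^ j)"
    using A K R0 \<mu> by (intro mult_mono frac_le[OF _ _ _ denom] P upper E) auto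
  also have "\<dots> = ((2 * K * A) * A * (2 * K * R) / (\<mu> * \<mu>)) ^ j / fact j"
  proof -
    have "(2 :: real) ^ j * 2 ^ j = 4 ^ j" by (simp flip: power_mult_distrib)
    then show ?thesis
      using \<mu> by (simp add: power_mult_distrib power_divide field_simps)
  qed
  finally show ?thesis .
qed

lemma coeff_exp_bound:
  assumes "\<And>n::nat. a + a' \<noteq> - of_nat n"
  shows "\<exists>L\<ge>0. \<forall>j. norm (coeffD a a' c c' j * hom2F1 j (c + c' + of_nat j - 1) c x y) \<le> L ^ j / fact j"
proof -
  obtain \<mu> where \<mu>: "\<mu> > 0"
    and shift_c: "\<And>n. \<mu> * (of_nat n + 1) \<le> norm (c + of_nat n)"
    and shift_c': "\<And>n. \<mu> * (of_nat n + 1) \<le> norm (c' + of_nat n)"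
    and shift_cc': "\<And>n. \<mu> * (of_nat n + 1) \<le> norm (c + c' + of_nat n)"
    using shifts_bounded_below_common by blast
  define A where "A = norm a + norm a' + norm c + norm c' + 1"
  define K where "K = 4 * A / \<mu>"
  define R where "R = norm x + norm y"
  have A: "1 \<le> A" and K: "0 \<le> K"
    using \<mu> by (simp_all add: A_def K_def)
  have upper: "norm (pochhammer z n) \<le> A ^ n * fact n" if "z \<in> {a, a', c, c'}" for z n
    by (rule norm_pochhammer_le) (use that in \<open>auto simp: A_def\<close>)
  have lower_c: "\<mu> ^ n * fact n \<le> norm (pochhammer c n)"
    and lower_c': "\<mu> ^ n * fact n \<le> norm (pochhammer c' n)" for n
    using norm_pochhammer_ge[of \<mu> c n 0] norm_pochhammer_ge[of \<mu> c' n 0] \<mu> shift_c shift_c' by simp_all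
  have lower_e: "\<mu> ^ j * fact j \<le> norm (pochhammer (c + c' + of_nat j - 1) j)" for j
  proof (cases j)
    case (Suc d)
    then show ?thesis
      using norm_pochhammer_ge[of \<mu> "c + c'" j d] \<mu> shift_cc' by (simp add: add.assoc)
  qed simp
  have kernel: "norm (kernel_vec j q) \<le> K ^ j" for j q
    unfolding K_def using A \<mu> upper lower_c lower_c' by (intro norm_kernel_vec_le) auto
  have "norm (coeffD a a' c c' j * hom2F1 j (c + c' + of_nat j - 1) c x y)
      \<le> ((2 * K * A) * A * (2 * K * R) / (\<mu> * \<mu>)) ^ j / fact j" for j
    using A \<mu> K upper lower_c' lower_e kernel by (intro norm_coeff_le[OF assms]) (auto simp: R_def)
  moreover have "0 \<le> (2 * K * A) * A * (2 * K * R) / (\<mu> * \<mu>)"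
    using A K by (simp add: R_def)
  ultimately show ?thesis
    by blast
qed

end

theorem corollary2p7:
  fixes a a' c c' x y :: complex
  assumes "\<And>n::nat. c \<noteq> - of_nat n"
    and "\<And>n::nat. c' \<noteq> - of_nat n"
    and "\<And>n::nat. c + c' \<noteq> - of_nat n"
    and "\<And>n::nat. a + a' \<noteq> - of_nat n"
  shows "(\<lambda>j. coeffD a a' c c' j * hom2F1 j (c + c' + of_nat j - 1) c x y
              * hyp1F1 (a + a' + of_nat j) (c + c' + 2 * of_nat j) (x + y))
         sums (hyp1F1 a c x * hyp1F1 a' c' y)"
proof -
  interpret pochhammer_weight c c'
    using assms(1-3) by unfold_locales
  define C where "C j = coeffD a a' c c' j * hom2F1 j (c + c' + of_nat j - 1) c x y" for j
  define E where "E j = hyp1F1_term (a + a' + of_nat j) (c + c' + 2 * of_nat j) (x + y)" for j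
  obtain L where L: "0 \<le> L" "\<And>j. norm (C j) \<le> L ^ j / fact j"
    using coeff_exp_bound[OF assms(4)] unfolding C_def by blast
  obtain Q where Q: "0 \<le> Q" "\<And>j k. norm (E j k) \<le> Q ^ k / fact k"
    using hyp1F1_row_bound unfolding E_def by blast
  have term_bound: "norm (C j * E j k) \<le> L ^ j / fact j * (Q ^ k / fact k)" for j k
    unfolding norm_mult using L Q by (intro mult_mono) auto
  have "(\<lambda>p. norm (case_prod (\<lambda>j k. C j * E j k) p)) summable_on UNIV"
    by (rule abs_summable_on_product_bound[OF term_bound]) (use L(1) Q(1) in \<open>auto intro: summable_exp_terms\<close>)
  moreover have "(\<lambda>k. C j * E j k) sums (C j * hyp1F1 (a + a' + of_nat j) (c + c' + 2 * of_nat j) (x + y))" for j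
    unfolding E_def by (intro sums_mult hyp1F1_term_sums(2) cc'_double_not_nonpos_int)
  moreover have "(\<lambda>N. \<Sum>j\<le>N. C j * E j (N - j)) sums (hyp1F1 a c x * hyp1F1 a' c' y)"
    using hyp1F1_product_sums[OF assms(1,2), where a = a and a' = a' and x = x and y = y]
    unfolding C_def E_def coefficient_identity[OF assms(4)] .
  ultimately have "(\<lambda>j. C j * hyp1F1 (a + a' + of_nat j) (c + c' + 2 * of_nat j) (x + y))
      sums (hyp1F1 a c x * hyp1F1 a' c' y)"
    by (rule sums_of_row_sums)
  then show ?thesis
    by (simp add: C_def)
qed

end
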